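(* Let $P_m(z)=\sum_{j=0}^m \frac{(2m-j)!}{j!(m-j)!}z^j$ and $R_m(z)=P_m(z)/P_m(-z)$. If $m$ is even, let $\hat z_m(t,0)$ be the solution of $R_m(z)=e^t$ satisfying $\hat z_m(t,0)=D_m/t+\mathcal{O}(1)$ as $|t|\to0$ for some constant $D_m>0$; if $m$ is odd, let $\hat z_m(t,\pi)$ be the solution of $R_m(z)=-e^t$ satisfying $\hat z_m(t,\pi)=E_m/t+\mathcal{O}(1)$ as $|t|\to0$ for some constant $E_m>0$. Then, as $|t|\to0$, $$R_m'(\hat z_m(t,0))=\mathcal{O}(t^2)\ \text{ for even } m,\qquad R_m'(\hat z_m(t,\pi))=\mathcal{O}(t^2)\ \text{ for odd } m.$$
   Context: $R_m$ is the stability function of the $m$-stage Gauss Runge–Kutta method (the $(m,m)$-Padé approximant of $e^z$). For even $m$ exactly one solution of $R_m(z)=e^t$, and for odd $m$ exactly one solution of $R_m(z)=-e^t$, tends to infinity as $t\to0$, with the stated asymptotics. *)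

theory Defs
  imports "HOL-Analysis.Analysis" "HOL-Library.Landau_Symbols"
begin

text \<open>Numerator of the (m,m)-Pade approximant of exp.\<close>
definition gaussP :: "nat \<Rightarrow> complex \<Rightarrow> complex" where
  "gaussP m z = (\<Sum>j=0..m. of_real (fact (2*m - j) / (fact j * fact (m - j))) * z ^ j)"

definition gaussR :: "nat \<Rightarrow> complex \<Rightarrow> complex" where
  "gaussR m z = gaussP m z / gaussP m (- z)"

end

theory Submission
  imports Defs "HOL-Complex_Analysis.Cauchy_Integral_Formula"
begin

(* Numerator and denominator of R_m have the same degree m, so in the chart w = 1/z at infinity
   R_m(z) = (-1)^m Q(w)/Q(-w), where Q(w) = w^m P_m(1/w) is the reversed polynomial and Q(0) = 1.
   Hence R_m is analytic at infinity, and the chain rule gives R_m'(z) = O(z^-2) as z -> infinity.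
   Since \hat z ~ D/t, this is O(t^2). *)

lemma sum_power_inverse_reflect:
  fixes c :: "nat \<Rightarrow> 'a::field"
  assumes "w \<noteq> 0"
  shows "w ^ n * (\<Sum>j=0..n. c j * inverse w ^ j) = (\<Sum>j=0..n. c j * w ^ (n - j))"
  unfolding sum_distrib_left
proof (rule sum.cong)
  fix j assume "j \<in> {0..n}"
  then have "w ^ n = w ^ (n - j) * w ^ j"
    by (simp add: power_add[symmetric])
  then show "w ^ n * (c j * inverse w ^ j) = c j * w ^ (n - j)"
    using assms by (simp add: field_simps)
qed simp

lemma deriv_bigo_at_infinity_if_analytic_at_inverse:
  fixes f g :: "complex \<Rightarrow> complex"
  assumes f: "f analytic_on {0}" and g: "\<And>z. z \<noteq> 0 \<Longrightarrow> g z = f (inverse z)"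
  shows "deriv g \<in> O[at_infinity](\<lambda>z. inverse z ^ 2)"
proof -
  obtain r where r: "r > 0" "f holomorphic_on ball 0 r"
    using f analytic_at_ball by blast
  have deriv_g: "deriv g z = - deriv f (inverse z) * inverse z ^ 2" if z: "2 / r \<le> norm z" for z
  proof -
    have "1 / r < norm z"
      using z r(1) by (simp add: field_simps)
    then have "norm (inverse z) < r"
      using r(1) less_imp_inverse_less[of "1 / r" "norm z"] by (simp add: norm_inverse)
    then have "z \<noteq> 0" "inverse z \<in> ball 0 r"
      using \<open>1 / r < norm z\<close> r(1) by auto
    then have "((\<lambda>z. f (inverse z)) has_field_derivative
                 deriv f (inverse z) * - (inverse z ^ Suc (Suc 0))) (at z)"
      by (intro DERIV_chain2[OF holomorphic_derivI[OF r(2)] DERIV_inverse]) auto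
    then have "(g has_field_derivative deriv f (inverse z) * - (inverse z ^ Suc (Suc 0))) (at z)"
      by (rule has_field_derivative_transform_within_open[where S = "- {0}"])
         (use \<open>z \<noteq> 0\<close> g in auto)
    then show ?thesis
      by (simp add: DERIV_imp_deriv numeral_2_eq_2)
  qed
  have "((\<lambda>z. - deriv f (inverse z)) \<longlongrightarrow> - deriv f 0) at_infinity"
    by (intro tendsto_minus isCont_tendsto_compose[OF _ tendsto_inverse_0]
        analytic_at_imp_isCont analytic_deriv f)
  moreover have "\<forall>\<^sub>F z in at_infinity. - deriv f (inverse z) = deriv g z / inverse z ^ 2
                   \<and> inverse z ^ 2 \<noteq> 0"
    unfolding eventually_at_infinity using r(1)
    by (intro exI[of _ "2 / r"]) (auto simp: deriv_g)
  ultimately show ?thesis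
    by (intro bigoI_tendsto[where c = "- deriv f 0"])
       (auto elim: eventually_mono intro: tendsto_cong[THEN iffD1])
qed

definition gaussP_rev :: "nat \<Rightarrow> complex \<Rightarrow> complex" where
  "gaussP_rev m w = (\<Sum>j=0..m. of_real (fact (2*m - j) / (fact j * fact (m - j))) * w ^ (m - j))"

lemma gaussP_rev_eq: "w \<noteq> 0 \<Longrightarrow> gaussP_rev m w = w ^ m * gaussP m (inverse w)"
  unfolding gaussP_rev_def gaussP_def by (rule sum_power_inverse_reflect[symmetric])

lemma analytic_on_gaussP_rev [analytic_intros]:
  "f analytic_on A \<Longrightarrow> (\<lambda>w. gaussP_rev m (f w)) analytic_on A"
  unfolding gaussP_rev_def by (intro analytic_intros)

lemma gaussP_rev_0: "gaussP_rev m 0 = 1"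
proof -
  have "gaussP_rev m 0 = (\<Sum>j\<in>{m}. of_real (fact (2*m - j) / (fact j * fact (m - j))))"
    unfolding gaussP_rev_def by (intro sum.mono_neutral_cong_right) auto
  then show ?thesis by simp
qed

lemma gaussR_eq_gaussP_rev:
  assumes "z \<noteq> 0"
  shows "gaussR m z = (-1) ^ m * (gaussP_rev m (inverse z) / gaussP_rev m (- inverse z))"
proof -
  define s a where "s = (-1 :: complex) ^ m" and "a = inverse z ^ m"
  have "s * s = 1" "a \<noteq> 0"
    using assms by (simp_all add: s_def a_def power_mult_distrib[symmetric])
  have "(- inverse z) ^ m = s * a"
    unfolding s_def a_def by (rule power_minus)
  then have "gaussP_rev m (- inverse z) = s * (a * gaussP m (- z))"
    using assms gaussP_rev_eq[of "- inverse z" m] by simp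
  moreover have "gaussP_rev m (inverse z) = a * gaussP m z"
    using assms gaussP_rev_eq[of "inverse z" m] by (simp add: a_def)
  ultimately show ?thesis
    using \<open>s * s = 1\<close> \<open>a \<noteq> 0\<close> by (auto simp: gaussR_def s_def[symmetric])
qed

lemma deriv_gaussR_bigo_at_infinity: "deriv (gaussR m) \<in> O[at_infinity](\<lambda>z. inverse z ^ 2)"
proof (rule deriv_bigo_at_infinity_if_analytic_at_inverse)
  show "(\<lambda>w. (-1) ^ m * (gaussP_rev m w / gaussP_rev m (- w))) analytic_on {0}"
    using gaussP_rev_0[of m] by (intro analytic_intros) auto
qed (rule gaussR_eq_gaussP_rev)

lemma tendsto_of_real_mult_if_bigo_pole:
  fixes f :: "real \<Rightarrow> 'a::real_normed_field"
  assumes "(\<lambda>t. f t - of_real (D / t)) \<in> O[at 0](\<lambda>_. 1)"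
  shows "((\<lambda>t. of_real t * f t) \<longlongrightarrow> of_real D) (at 0)"
proof -
  have "(\<lambda>t. of_real t :: 'a) \<in> o[at 0](\<lambda>_. 1)"
    by (intro smalloI_tendsto) (auto intro!: tendsto_eq_intros)
  from landau_o.small_big_mult[OF this assms]
  have "((\<lambda>t. of_real t * (f t - of_real (D / t))) \<longlongrightarrow> 0) (at 0)"
    using smalloD_tendsto by fastforce
  then have "((\<lambda>t. of_real D + of_real t * (f t - of_real (D / t))) \<longlongrightarrow> of_real D) (at 0)"
    using tendsto_add[OF tendsto_const] by fastforce
  moreover have "\<forall>\<^sub>F t in at 0. of_real D + of_real t * (f t - of_real (D / t)) = of_real t * f t"
    by (auto simp: eventually_at_filter field_simps)
  ultimately show ?thesis
    by (rule tendsto_cong[THEN iffD1, rotated])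
qed

lemma filterlim_at_infinity_if_tendsto_of_real_mult:
  fixes f :: "real \<Rightarrow> 'a::real_normed_field"
  assumes "((\<lambda>t. of_real t * f t) \<longlongrightarrow> c) (at 0)" and "c \<noteq> 0"
  shows "filterlim f at_infinity (at 0)"
proof -
  have "filterlim (\<lambda>t. of_real (inverse t) :: 'a) at_infinity (at 0)"
    using filterlim_inverse_at_infinity[where 'a = real]
    by (simp add: filterlim_at_infinity_conv_norm_at_top norm_inverse)
  with assms have "filterlim (\<lambda>t. of_real t * f t * of_real (inverse t)) at_infinity (at 0)"
    by (rule tendsto_mult_filterlim_at_infinity)
  then show ?thesis
    by (rule filterlim_cong[THEN iffD1, rotated 3]) (auto simp: eventually_at_filter)
qed

lemma inverse_bigo_if_tendsto_of_real_mult: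
  fixes f :: "real \<Rightarrow> 'a::real_normed_field"
  assumes "((\<lambda>t. of_real t * f t) \<longlongrightarrow> c) (at 0)" and "c \<noteq> 0"
  shows "(\<lambda>t. inverse (f t)) \<in> O[at 0](\<lambda>t. of_real t)"
proof (rule bigoI_tendsto)
  have "(\<lambda>t. inverse (f t) / of_real t) = (\<lambda>t. inverse (of_real t * f t))"
    by (simp add: field_simps)
  moreover have "(\<lambda>t. inverse (of_real t * f t)) \<midarrow>0\<rightarrow> inverse c"
    using assms by (intro tendsto_intros)
  ultimately show "(\<lambda>t. inverse (f t) / of_real t) \<midarrow>0\<rightarrow> inverse c"
    by (simp only:)
  show "\<forall>\<^sub>F t in at 0. (of_real t :: 'a) \<noteq> 0"
    by (auto simp: eventually_at_filter)
qed

theorem lemma5: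
  fixes m :: nat and zh :: "real \<Rightarrow> complex" and D :: real
  assumes "m \<ge> 1"
    and "\<forall>\<^sub>F t in at 0. gaussR m (zh t) = (if even m then exp (of_real t) else - exp (of_real t))"
    and "D > 0"
    and "(\<lambda>t. zh t - of_real (D / t)) \<in> O[at 0](\<lambda>_. 1)"
  shows "(\<lambda>t. deriv (gaussR m) (zh t)) \<in> O[at 0](\<lambda>t. (of_real t)^2)"
proof -
  have lim: "((\<lambda>t. of_real t * zh t) \<longlongrightarrow> of_real D) (at 0)"
    using assms(4) by (rule tendsto_of_real_mult_if_bigo_pole)
  have D: "complex_of_real D \<noteq> 0"
    using assms(3) by simp
  have "(\<lambda>t. deriv (gaussR m) (zh t)) \<in> O[at 0](\<lambda>t. inverse (zh t) ^ 2)"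
    using deriv_gaussR_bigo_at_infinity filterlim_at_infinity_if_tendsto_of_real_mult[OF lim D]
    by (rule landau_o.big.compose)
  also have "(\<lambda>t. inverse (zh t) ^ 2) \<in> O[at 0](\<lambda>t. (of_real t)^2)"
    using inverse_bigo_if_tendsto_of_real_mult[OF lim D] by (rule landau_o.big_power)
  finally show ?thesis .
qed

end
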